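(* Let $\theta>1$, $r\in(\theta^{-1},\theta^{-1/2}]$ and $s=\max\big(1,\frac{\ln\theta}{\ln(r\theta)}-2\big)$. Let $(P_1,\dots,P_n)$ be a random price sequence with values in $[1,\theta]$ and maximum $P^*$, and suppose the prediction is deterministic, $Y=y$ almost surely for a fixed $y\in[1,\theta]$. Then \[ \frac{\mathbb{E}[\mathsf{A}^1_r(P,Y)]}{\mathbb{E}[P^*]}\ \ge\ \frac1{r\theta}\,\Upsilon(y),\qquad \Upsilon(y):=\frac{\mathbb{E}\big[P^*\,\mathcal{E}(P^*,y)^{s}\big]}{\mathbb{E}[P^*]}. \]
   Context: One-max search: fix $\theta>1$. Prices $p_1,\dots,p_n\in[1,\theta]$ are revealed one at a time; the algorithm receives at the start a prediction $y\in[1,\theta]$ of the maximum price. At each step it irrevocably accepts the current price (payoff = that price) or rejects it; if nothing is accepted the payoff is $1$. Let $\varphi_r(z)=\frac{r\theta-1}{1-r}+\frac{1-r^2\theta}{1-r}\cdot\frac{z}{r\theta}$ and $\Phi^1_r(z)=\max(r\theta,\varphi_r(z))$; $\mathsf{A}^1_r$ accepts the first price $p_i\ge\Phi^1_r(y)$, and $\mathsf{A}^1_r(P,Y)$ is its payoff on the realized prices and prediction. $\mathcal{E}(a,b)=\min\{a/b,b/a\}$. *)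

theory Defs
  imports "HOL-Probability.Probability"
begin

definition phi_r :: "real \<Rightarrow> real \<Rightarrow> real \<Rightarrow> real" where
  "phi_r \<theta> r z = (r*\<theta> - 1)/(1 - r) + (1 - r^2*\<theta>)/(1 - r) * (z/(r*\<theta>))"

definition Phi1 :: "real \<Rightarrow> real \<Rightarrow> real \<Rightarrow> real" where
  "Phi1 \<theta> r z = max (r*\<theta>) (phi_r \<theta> r z)"

definition A1 :: "real \<Rightarrow> real \<Rightarrow> nat \<Rightarrow> (nat \<Rightarrow> real) \<Rightarrow> real \<Rightarrow> real" where
  "A1 \<theta> r n p y =
     (case find (\<lambda>x. Phi1 \<theta> r y \<le> x) (map p [0..<n]) of None \<Rightarrow> 1 | Some x \<Rightarrow> x)"

definition maxprice :: "nat \<Rightarrow> (nat \<Rightarrow> real) \<Rightarrow> real" where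
  "maxprice n p = Max (p ` {..<n})"

definition Eff :: "real \<Rightarrow> real \<Rightarrow> real" where
  "Eff a b = min (a/b) (b/a)"

end

theory Submission
  imports Defs
begin

(* The bound holds pathwise: writing E = E(P*,y), every price sequence satisfies
   P* E^s <= r theta A^1_r(P,y), and taking expectations gives the claim.  The function
   phi_r is the affine map through (r theta, r theta) and (theta, 1/r).  If some price
   reaches the threshold Phi = Phi^1_r(y), the payoff is at least Phi, and
   P* E^s <= P* E <= y <= r theta Phi.  Otherwise the payoff is 1 and P* < Phi; the only
   nontrivial case is P* > r theta, where Phi = phi_r(y) <= y, so E = P*/y and
   P* E^s = y (P*/y)^(s+1) <= y (phi_r(y)/y)^(s+1).  Since phi_r(y)/y is affine in u = 1/y,
   the function (phi_r(y)/y)^(s+1) - r theta u is convex in u; it vanishes at y = r theta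
   and is nonpositive at y = theta iff (r theta)^(-(s+1)) <= r, that is, iff
   ln theta <= (s+2) ln (r theta), which is how s is chosen. *)

lemma convex_on_compose_affine:
  fixes g :: "real \<Rightarrow> real"
  assumes "convex_on T g" and "convex S" and "\<And>x. x \<in> S \<Longrightarrow> c*x + d \<in> T"
  shows "convex_on S (\<lambda>x. g (c*x + d))"
proof (rule convex_onI)
  fix t x y :: real
  assume "0 < t" "t < 1" "x \<in> S" "y \<in> S"
  have "c * ((1-t) *\<^sub>R x + t *\<^sub>R y) + d = (1-t) *\<^sub>R (c*x + d) + t *\<^sub>R (c*y + d)"
    by (simp add: algebra_simps)
  then show "g (c * ((1-t) *\<^sub>R x + t *\<^sub>R y) + d) \<le> (1-t) * g (c*x + d) + t * g (c*y + d)"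
    using convex_onD[OF assms(1)] \<open>0 < t\<close> \<open>t < 1\<close> \<open>x \<in> S\<close> \<open>y \<in> S\<close> assms(3) by simp
qed fact

lemma convex_on_le_linear:
  fixes f :: "real \<Rightarrow> real"
  assumes "convex_on {a..b} f" and "f a \<le> c*a" and "f b \<le> c*b" and "x \<in> {a..b}"
  shows "f x \<le> c*x"
proof -
  have "convex_on {a..b} (\<lambda>x. f x - c*x)"
  proof (rule convex_onI)
    fix t x y :: real
    assume "0 < t" "t < 1" "x \<in> {a..b}" "y \<in> {a..b}"
    then have "f ((1-t) *\<^sub>R x + t *\<^sub>R y) \<le> (1-t) * f x + t * f y"
      by (intro convex_onD[OF assms(1)]) auto
    then show "f ((1-t) *\<^sub>R x + t *\<^sub>R y) - c * ((1-t) *\<^sub>R x + t *\<^sub>R y)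
        \<le> (1-t) * (f x - c*x) + t * (f y - c*y)"
      by (simp add: algebra_simps)
  qed simp
  from convex_on_le_max[OF this assms(4)] assms(2,3) show ?thesis by simp
qed

lemma Eff_pos: "0 < a \<Longrightarrow> 0 < b \<Longrightarrow> 0 < Eff a b"
  by (simp add: Eff_def)

lemma Eff_le_1: "0 < a \<Longrightarrow> 0 < b \<Longrightarrow> Eff a b \<le> 1"
  by (cases "a \<le> b") (simp_all add: Eff_def min_le_iff_disj)

lemma Eff_le_divide: "Eff a b \<le> b / a"
  by (simp add: Eff_def)

lemma Eff_eq_divide:
  assumes "0 < a" and "a \<le> b"
  shows "Eff a b = a / b"
proof -
  have "a / b \<le> 1" and "1 \<le> b / a" using assms by simp_all
  then show ?thesis by (simp add: Eff_def)
qed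

lemma Eff_powr_le_1: "0 < a \<Longrightarrow> 0 < b \<Longrightarrow> 0 \<le> s \<Longrightarrow> Eff a b powr s \<le> 1"
  by (intro powr_le1) (simp_all add: Eff_le_1 Eff_pos less_imp_le)

lemma maxprice_in_prices: "0 < n \<Longrightarrow> maxprice n p \<in> p ` {..<n}"
  unfolding maxprice_def by (rule Max_in) auto

lemma find_append:
  "find Q (xs @ ys) = (case find Q xs of None \<Rightarrow> find Q ys | Some x \<Rightarrow> Some x)"
  by (induction xs) auto

lemma A1_accepts: "i < n \<Longrightarrow> Phi1 \<theta> r y \<le> p i \<Longrightarrow> Phi1 \<theta> r y \<le> A1 \<theta> r n p y"
  by (auto simp: A1_def find_Some_iff split: option.split dest: find_None_iff[THEN iffD1])

lemma A1_rejects: "(\<And>i. i < n \<Longrightarrow> p i < Phi1 \<theta> r y) \<Longrightarrow> A1 \<theta> r n p y = 1"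
  by (auto simp: A1_def find_None_iff[THEN iffD2] not_le)

lemma A1_in_prices: "A1 \<theta> r n p y \<in> insert 1 (p ` {..<n})"
  by (auto simp: A1_def find_Some_iff split: option.split)

lemma A1_Suc:
  "A1 \<theta> r (Suc n) p y =
    (if \<forall>j<n. p j < Phi1 \<theta> r y then (if Phi1 \<theta> r y \<le> p n then p n else 1) else A1 \<theta> r n p y)"
proof (cases "\<forall>j<n. p j < Phi1 \<theta> r y")
  case True
  then have "find (\<lambda>x. Phi1 \<theta> r y \<le> x) (map p [0..<n]) = None"
    by (auto simp: find_None_iff)
  with True show ?thesis by (simp add: A1_def find_append)
next
  case False
  then obtain x where "find (\<lambda>x. Phi1 \<theta> r y \<le> x) (map p [0..<n]) = Some x"
    by (cases "find (\<lambda>x. Phi1 \<theta> r y \<le> x) (map p [0..<n])") (auto simp: find_None_iff not_less)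
  with False show ?thesis by (auto simp: A1_def find_append)
qed

lemma borel_measurable_A1:
  "(\<And>i. i < n \<Longrightarrow> (\<lambda>\<omega>. P \<omega> i) \<in> borel_measurable M) \<Longrightarrow>
    (\<lambda>\<omega>. A1 \<theta> r n (P \<omega>) y) \<in> borel_measurable M"
proof (induction n)
  case 0
  then show ?case by (simp add: A1_def)
next
  case (Suc n)
  have [measurable]: "(\<lambda>\<omega>. P \<omega> i) \<in> borel_measurable M" if "i \<le> n" for i
    using Suc.prems that by simp
  have [measurable]: "(\<lambda>\<omega>. A1 \<theta> r n (P \<omega>) y) \<in> borel_measurable M"
    using Suc by simp
  show ?case unfolding A1_Suc by measurable
qed

lemma phi_r_affine:
  "phi_r \<theta> r z = phi_r \<theta> r w + (1 - r^2*\<theta>) / ((1-r) * (r*\<theta>)) * (z - w)"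
proof -
  have "phi_r \<theta> r z - phi_r \<theta> r w = (1 - r^2*\<theta>) / (1-r) * ((z - w) / (r*\<theta>))"
    unfolding phi_r_def by (simp add: diff_divide_distrib right_diff_distrib)
  also have "\<dots> = (1 - r^2*\<theta>) / ((1-r) * (r*\<theta>)) * (z - w)"
    by (simp add: times_divide_times_eq)
  finally show ?thesis by simp
qed

locale one_max_threshold =
  fixes \<theta> r :: real
  assumes \<theta>_gt_1: "1 < \<theta>" and r\<theta>_gt_1: "1 < r*\<theta>" and r2\<theta>_le_1: "r^2*\<theta> \<le> 1"
begin

lemma r_pos: "0 < r"
  using \<theta>_gt_1 r\<theta>_gt_1 by (smt (verit) zero_less_mult_iff)

lemma r_lt_1: "r < 1"
proof -
  have "r * (r*\<theta>) < 1 * (r*\<theta>)"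
    using r2\<theta>_le_1 r\<theta>_gt_1 by (simp add: power2_eq_square mult.assoc)
  then show ?thesis using r\<theta>_gt_1 by (subst (asm) mult_less_cancel_right) auto
qed

definition phi_slope :: real where
  "phi_slope = (1 - r^2*\<theta>) / ((1-r) * (r*\<theta>))"

lemma phi_slope_nonneg: "0 \<le> phi_slope"
  unfolding phi_slope_def using r2\<theta>_le_1 r_lt_1 r\<theta>_gt_1 by simp

lemma r\<theta>_phi_slope_le_1: "r*\<theta> * phi_slope \<le> 1"
proof -
  have "r*\<theta> * phi_slope = (1 - r^2*\<theta>) / (1-r)"
    unfolding phi_slope_def using r_pos \<theta>_gt_1 by simp
  also have "\<dots> \<le> 1"
  proof -
    have "r * 1 \<le> r * (r*\<theta>)"
      using r_pos r\<theta>_gt_1 by (intro mult_left_mono) auto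
    then show ?thesis using r_lt_1 by (simp add: power2_eq_square mult.assoc)
  qed
  finally show ?thesis .
qed

lemma phi_slope_le_1: "phi_slope \<le> 1"
proof -
  have "1 * phi_slope \<le> r*\<theta> * phi_slope"
    using r\<theta>_gt_1 phi_slope_nonneg by (intro mult_right_mono) auto
  then show ?thesis using r\<theta>_phi_slope_le_1 by simp
qed

lemma phi_r_at_r\<theta>: "phi_r \<theta> r (r*\<theta>) = r*\<theta>"
proof -
  have "phi_r \<theta> r (r*\<theta>) = (r*\<theta> - 1) / (1-r) + (1 - r^2*\<theta>) / (1-r)"
    unfolding phi_r_def using r_pos \<theta>_gt_1 by simp
  also have "\<dots> = ((r*\<theta> - 1) + (1 - r^2*\<theta>)) / (1-r)"
    by (rule add_divide_distrib[symmetric])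
  also have "(r*\<theta> - 1) + (1 - r^2*\<theta>) = r*\<theta> * (1-r)"
    by (simp add: algebra_simps power2_eq_square)
  finally show ?thesis using r_lt_1 by simp
qed

lemma phi_r_at_\<theta>: "phi_r \<theta> r \<theta> = 1/r"
proof -
  have "phi_r \<theta> r \<theta> = r*\<theta> + phi_slope * (\<theta> - r*\<theta>)"
    using phi_r_affine[of \<theta> r \<theta> "r*\<theta>"] by (simp add: phi_r_at_r\<theta> phi_slope_def)
  also have "phi_slope * (\<theta> - r*\<theta>) = (1 - r^2*\<theta>) / r"
    unfolding phi_slope_def using r_pos r_lt_1 \<theta>_gt_1 by (simp add: field_simps)
  also have "r*\<theta> + (1 - r^2*\<theta>) / r = 1/r"
    using r_pos by (simp add: field_simps power2_eq_square)
  finally show ?thesis .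
qed

lemma le_r\<theta>_Phi1:
  assumes "y \<le> \<theta>"
  shows "y \<le> r*\<theta> * Phi1 \<theta> r y"
proof -
  have "r*\<theta> * phi_r \<theta> r y = r*\<theta> * (1/r + phi_slope * (y - \<theta>))"
    using phi_r_affine[of \<theta> r y \<theta>] by (simp add: phi_r_at_\<theta> phi_slope_def)
  also have "\<dots> = \<theta> + (r*\<theta> * phi_slope) * (y - \<theta>)"
    using r_pos by (simp add: algebra_simps)
  also have "\<dots> \<ge> \<theta> + 1 * (y - \<theta>)"
    using r\<theta>_phi_slope_le_1 assms by (intro add_left_mono mult_right_mono_neg) auto
  finally have "y \<le> r*\<theta> * phi_r \<theta> r y" by simp
  also have "\<dots> \<le> r*\<theta> * Phi1 \<theta> r y"
    using r\<theta>_gt_1 unfolding Phi1_def by (intro mult_left_mono) auto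
  finally show ?thesis .
qed

lemma phi_r_gt_r\<theta>D:
  assumes "r*\<theta> < phi_r \<theta> r y"
  shows "r*\<theta> < y" and "phi_r \<theta> r y \<le> y"
proof -
  have phi: "phi_r \<theta> r y = r*\<theta> + phi_slope * (y - r*\<theta>)"
    using phi_r_affine[of \<theta> r y "r*\<theta>"] by (simp add: phi_r_at_r\<theta> phi_slope_def)
  with assms phi_slope_nonneg show "r*\<theta> < y"
    by (smt (verit) mult_nonneg_nonpos)
  then have "phi_slope * (y - r*\<theta>) \<le> 1 * (y - r*\<theta>)"
    using phi_slope_le_1 by (intro mult_right_mono) auto
  with phi show "phi_r \<theta> r y \<le> y" by simp
qed

end

locale one_max_exponent = one_max_threshold +
  fixes s :: real
  assumes s_ge_1: "1 \<le> s" and ln_\<theta>_le: "ln \<theta> \<le> (s+2) * ln (r*\<theta>)"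
begin

lemma inverse_r\<theta>_powr_le_r: "(1/(r*\<theta>)) powr (s+1) \<le> r"
proof -
  have "(1/(r*\<theta>)) powr (s+1) = exp (- ((s+1) * ln (r*\<theta>)))"
    using r_pos \<theta>_gt_1 by (simp add: powr_def ln_div)
  also have "\<dots> \<le> exp (ln (r*\<theta>) - ln \<theta>)"
    using ln_\<theta>_le by (simp add: algebra_simps)
  also have "\<dots> = r"
    using r_pos \<theta>_gt_1 by (simp add: ln_mult)
  finally show ?thesis .
qed

lemma phi_r_ratio_powr_le:
  assumes "r*\<theta> \<le> y" and "y \<le> \<theta>"
  shows "y * (phi_r \<theta> r y / y) powr (s+1) \<le> r*\<theta>"
proof -
  define c where "c = phi_r \<theta> r 0"
  have c_pos: "0 < c"
    unfolding c_def phi_r_def using r_lt_1 r\<theta>_gt_1 by simp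
  have ratio: "phi_r \<theta> r z / z = c * (1/z) + phi_slope" if "z \<noteq> 0" for z
    using phi_r_affine[of \<theta> r z 0] that unfolding c_def phi_slope_def by (simp add: field_simps)
  define f where "f u = (c*u + phi_slope) powr (s+1)" for u
  have "convex_on {1/\<theta>..1/(r*\<theta>)} f"
    unfolding f_def
  proof (rule convex_on_compose_affine[OF powr_convex])
    fix u assume "u \<in> {1/\<theta>..1/(r*\<theta>)}"
    then have "0 < u" using \<theta>_gt_1 by (auto intro: less_le_trans[of 0 "1/\<theta>"])
    then show "c*u + phi_slope \<in> {0<..}"
      using c_pos phi_slope_nonneg by (simp add: add_pos_nonneg)
  qed (use s_ge_1 in auto)
  moreover have "f (1/\<theta>) \<le> r*\<theta> * (1/\<theta>)"
    using ratio[of \<theta>] inverse_r\<theta>_powr_le_r r_pos \<theta>_gt_1 by (simp add: f_def phi_r_at_\<theta>)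
  moreover have "f (1/(r*\<theta>)) \<le> r*\<theta> * (1/(r*\<theta>))"
    using ratio[of "r*\<theta>"] r_pos \<theta>_gt_1 by (simp add: f_def phi_r_at_r\<theta>)
  moreover have "1/y \<in> {1/\<theta>..1/(r*\<theta>)}"
    using assms r\<theta>_gt_1 by (auto simp: divide_simps)
  ultimately have "f (1/y) \<le> r*\<theta> * (1/y)"
    by (rule convex_on_le_linear)
  moreover have "y > 0" using assms r\<theta>_gt_1 by simp
  ultimately show ?thesis
    using ratio[of y] by (simp add: f_def field_simps)
qed

lemma mult_Eff_powr_le_Phi1:
  assumes "1 \<le> m" and "1 \<le> y" and "y \<le> \<theta>"
  shows "m * Eff m y powr s \<le> r*\<theta> * Phi1 \<theta> r y"
proof -
  have "Eff m y powr s \<le> Eff m y"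
    using assms s_ge_1 by (intro powr_le_one_le) (simp_all add: Eff_pos Eff_le_1)
  also have "\<dots> \<le> y / m"
    by (rule Eff_le_divide)
  finally have "m * Eff m y powr s \<le> m * (y / m)"
    using assms by (intro mult_left_mono) auto
  also have "\<dots> = y"
    using assms by simp
  also have "\<dots> \<le> r*\<theta> * Phi1 \<theta> r y"
    using assms by (intro le_r\<theta>_Phi1)
  finally show ?thesis .
qed

lemma mult_Eff_powr_le_r\<theta>:
  assumes "1 \<le> m" and "m < Phi1 \<theta> r y" and "1 \<le> y" and "y \<le> \<theta>"
  shows "m * Eff m y powr s \<le> r*\<theta>"
proof (cases "m \<le> r*\<theta>")
  case True
  have "m * Eff m y powr s \<le> m * 1"
    using assms s_ge_1 by (intro mult_left_mono Eff_powr_le_1) auto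
  with True show ?thesis by simp
next
  case False
  with assms(2) have m_lt_phi: "m < phi_r \<theta> r y" and phi_gt: "r*\<theta> < phi_r \<theta> r y"
    by (auto simp: Phi1_def)
  have "m < y"
    using m_lt_phi phi_r_gt_r\<theta>D(2)[OF phi_gt] by simp
  then have "m * Eff m y powr s = y * (m / y) powr (s+1)"
    using assms by (simp add: Eff_eq_divide powr_add)
  also have "\<dots> \<le> y * (phi_r \<theta> r y / y) powr (s+1)"
    using assms m_lt_phi s_ge_1 by (intro mult_left_mono powr_mono2 divide_right_mono) auto
  also have "\<dots> \<le> r*\<theta>"
    using phi_r_gt_r\<theta>D(1)[OF phi_gt] assms by (intro phi_r_ratio_powr_le) auto
  finally show ?thesis .
qed

lemma maxprice_Eff_powr_le_A1:
  assumes "0 < n" and "\<forall>i<n. 1 \<le> p i" and "1 \<le> y" and "y \<le> \<theta>"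
  shows "maxprice n p * Eff (maxprice n p) y powr s \<le> r*\<theta> * A1 \<theta> r n p y"
proof -
  have max_ge_1: "1 \<le> maxprice n p"
    using maxprice_in_prices[of n p] assms(1,2) by auto
  show ?thesis
  proof (cases "\<exists>i<n. Phi1 \<theta> r y \<le> p i")
    case True
    then have "Phi1 \<theta> r y \<le> A1 \<theta> r n p y"
      using A1_accepts by blast
    with mult_Eff_powr_le_Phi1[OF max_ge_1 assms(3,4)] r\<theta>_gt_1 show ?thesis
      by (smt (verit) mult_left_mono)
  next
    case False
    then have "A1 \<theta> r n p y = 1"
      by (intro A1_rejects) auto
    moreover have "maxprice n p < Phi1 \<theta> r y"
      using maxprice_in_prices[of n p] assms(1) False by auto
    ultimately show ?thesis
      using mult_Eff_powr_le_r\<theta>[OF max_ge_1 _ assms(3,4)] by simp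
  qed
qed

lemma integral_maxprice_Eff_powr_le_A1:
  assumes "prob_space M" and "0 < n"
    and "\<forall>i<n. (\<lambda>\<omega>. P \<omega> i) \<in> borel_measurable M"
    and "\<forall>\<omega>\<in>space M. \<forall>i<n. 1 \<le> P \<omega> i \<and> P \<omega> i \<le> \<theta>"
    and "1 \<le> y" and "y \<le> \<theta>"
  shows "(\<integral>\<omega>. maxprice n (P \<omega>) * Eff (maxprice n (P \<omega>)) y powr s \<partial>M)
    \<le> r*\<theta> * (\<integral>\<omega>. A1 \<theta> r n (P \<omega>) y \<partial>M)"
proof -
  interpret prob_space M by fact
  have A_bounds: "1 \<le> A1 \<theta> r n (P \<omega>) y \<and> A1 \<theta> r n (P \<omega>) y \<le> \<theta>" if "\<omega> \<in> space M" for \<omega>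
    using A1_in_prices[of \<theta> r n "P \<omega>" y] \<theta>_gt_1 assms(4) that by auto
  have "integrable M (\<lambda>\<omega>. A1 \<theta> r n (P \<omega>) y)"
    using assms(3) \<theta>_gt_1
    by (intro integrable_const_bound[where B=\<theta>] borel_measurable_A1 AE_I2)
      (auto simp: abs_le_iff dest: A_bounds)
  then have "(\<integral>\<omega>. maxprice n (P \<omega>) * Eff (maxprice n (P \<omega>)) y powr s \<partial>M)
      \<le> (\<integral>\<omega>. r*\<theta> * A1 \<theta> r n (P \<omega>) y \<partial>M)"
    using assms(2,4-6) r\<theta>_gt_1
    by (intro integral_mono') (auto intro!: maxprice_Eff_powr_le_A1 dest: A_bounds)
  then show ?thesis by simp
qed

end

lemma one_max_exponentI:
  assumes "1 < \<theta>" and "1/\<theta> < r" and "r \<le> 1 / sqrt \<theta>"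
    and "s = max 1 (ln \<theta> / ln (r*\<theta>) - 2)"
  shows "one_max_exponent \<theta> r s"
proof -
  have r\<theta>: "1 < r*\<theta>"
    using assms(1,2) by (simp add: divide_less_eq mult.commute)
  have "0 < r"
    by (rule less_trans[OF _ assms(2)]) (use assms(1) in simp)
  then have "r^2 \<le> (1 / sqrt \<theta>)^2"
    using assms(3) by (intro power_mono) auto
  then have r2\<theta>: "r^2*\<theta> \<le> 1"
    using assms(1) by (simp add: power_divide divide_simps)
  have "ln \<theta> / ln (r*\<theta>) \<le> s + 2"
    using assms(4) by simp
  then have "ln \<theta> \<le> (s+2) * ln (r*\<theta>)"
    using r\<theta> by (simp add: pos_divide_le_eq)
  with assms(1,4) r\<theta> r2\<theta> show ?thesis
    by unfold_locales auto
qed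

theorem corollary2:
  fixes M :: "'a measure" and P :: "'a \<Rightarrow> nat \<Rightarrow> real"
    and \<theta> r y s :: real and n :: nat
  assumes "prob_space M"
    and "\<theta> > 1"
    and "1/\<theta> < r" and "r \<le> 1 / sqrt \<theta>"
    and "s = max 1 (ln \<theta> / ln (r*\<theta>) - 2)"
    and "n \<ge> 1"
    and "\<forall>i<n. (\<lambda>\<omega>. P \<omega> i) \<in> borel_measurable M"
    and "\<forall>\<omega>\<in>space M. \<forall>i<n. 1 \<le> P \<omega> i \<and> P \<omega> i \<le> \<theta>"
    and "1 \<le> y" and "y \<le> \<theta>"
  shows "(\<integral>\<omega>. A1 \<theta> r n (P \<omega>) y \<partial>M) / (\<integral>\<omega>. maxprice n (P \<omega>) \<partial>M)
         \<ge> 1/(r*\<theta>) *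
           ((\<integral>\<omega>. maxprice n (P \<omega>) * Eff (maxprice n (P \<omega>)) y powr s \<partial>M)
             / (\<integral>\<omega>. maxprice n (P \<omega>) \<partial>M))"
proof -
  interpret one_max_exponent \<theta> r s
    using assms(2-5) by (rule one_max_exponentI)
  have n_pos: "0 < n" using assms(6) by simp
  have "1 \<le> maxprice n (P \<omega>)" if "\<omega> \<in> space M" for \<omega>
    using maxprice_in_prices[OF n_pos, of "P \<omega>"] assms(8) that by auto
  then have "0 \<le> (\<integral>\<omega>. maxprice n (P \<omega>) \<partial>M)"
    by (intro integral_nonneg_AE AE_I2) fastforce
  moreover have "1/(r*\<theta>) * (\<integral>\<omega>. maxprice n (P \<omega>) * Eff (maxprice n (P \<omega>)) y powr s \<partial>M)
      \<le> (\<integral>\<omega>. A1 \<theta> r n (P \<omega>) y \<partial>M)"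
    using integral_maxprice_Eff_powr_le_A1[OF assms(1) n_pos assms(7-10)] r\<theta>_gt_1
    by (simp add: divide_simps mult.commute)
  ultimately show ?thesis
    unfolding times_divide_eq_right by (rule divide_right_mono[rotated])
qed

end
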